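(* Let $p$ be a prime, $d\geq 2$, let $X$ be the free abelian pro-$p$ group on $x_1,\ldots,x_d$, and let $R=\mathbb{Z}_p[[X]]$ be its completed group algebra over $\mathbb{Z}_p$. Let $\mathcal{C}\subseteq X^{(d)}$ denote the set of all bases $\mathbf{y}=(y_1,\ldots,y_d)$ of $X$. Then $$\bigcap_{\mathbf{y}\in\mathcal{C}}\big((y_1-1)R+\cdots+(y_{d-1}-1)R\big)=0.$$
   Context: A basis of the free abelian pro-$p$ group $X\cong\mathbb{Z}_p^{d}$ is a $d$-tuple $(y_1,\ldots,y_d)$ of elements of $X$ such that $X$ is the (internal) direct product of the procyclic subgroups $\overline{\langle y_i\rangle}\cong\mathbb{Z}_p$, equivalently a tuple topologically generating $X$. $\mathbb{Z}_p[[X]]=\varprojlim \mathbb{Z}_p/p^n[X/U]$ over open subgroups $U$ and $n$. *)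

theory Defs
  imports Main "HOL-Computational_Algebra.Primes"
begin

text \<open>Z_p = compatible residue sequences z n in {0..<p^n}.
 X = Z_p^d: x i n = level-n residue of coordinate i (i < d), zero for i >= d.
 X/p^n X = (Z/p^n)^d is modelled by the box B n.
 Z_p[[X]] = inverse limit over n of (Z/p^n)[(Z/p^n)^d] (the subgroups p^n X are cofinal
 among open subgroups): compatible families mu n : box n -> {0..<p^n}.\<close>

definition padic_int :: "nat \<Rightarrow> (nat \<Rightarrow> int) set" where
  "padic_int p = {z. (\<forall>n. 0 \<le> z n \<and> z n < int p ^ n) \<and>
                     (\<forall>n. z (Suc n) mod (int p ^ n) = z n)}"

definition Xgrp :: "nat \<Rightarrow> nat \<Rightarrow> (nat \<Rightarrow> nat \<Rightarrow> int) set" where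
  "Xgrp p d = {x. (\<forall>i<d. x i \<in> padic_int p) \<and> (\<forall>i\<ge>d. \<forall>n. x i n = 0)}"

definition lvl :: "(nat \<Rightarrow> nat \<Rightarrow> int) \<Rightarrow> nat \<Rightarrow> (nat \<Rightarrow> int)" where
  "lvl x n = (\<lambda>i. x i n)"

definition box :: "nat \<Rightarrow> nat \<Rightarrow> nat \<Rightarrow> (nat \<Rightarrow> int) set" where
  "box p d n = {a. (\<forall>i<d. 0 \<le> a i \<and> a i < int p ^ n) \<and> (\<forall>i\<ge>d. a i = 0)}"

definition vmod :: "nat \<Rightarrow> nat \<Rightarrow> (nat \<Rightarrow> int) \<Rightarrow> (nat \<Rightarrow> int)" where
  "vmod p n a = (\<lambda>i. a i mod (int p ^ n))"

type_synonym elt = "nat \<Rightarrow> (nat \<Rightarrow> int) \<Rightarrow> int"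

definition Iw :: "nat \<Rightarrow> nat \<Rightarrow> elt set" where
  "Iw p d = {\<mu>. (\<forall>n a. a \<in> box p d n \<longrightarrow> 0 \<le> \<mu> n a \<and> \<mu> n a < int p ^ n) \<and>
               (\<forall>n a. a \<notin> box p d n \<longrightarrow> \<mu> n a = 0) \<and>
               (\<forall>n a. a \<in> box p d n \<longrightarrow>
                  \<mu> n a = (\<Sum>b\<in>{b\<in>box p d (Suc n). vmod p n b = a}. \<mu> (Suc n) b) mod (int p ^ n))}"

definition Iw_zero :: elt where
  "Iw_zero = (\<lambda>n a. 0)"

definition Iw_add :: "nat \<Rightarrow> nat \<Rightarrow> elt \<Rightarrow> elt \<Rightarrow> elt" where
  "Iw_add p d \<mu> \<nu> = (\<lambda>n c. if c \<in> box p d n then (\<mu> n c + \<nu> n c) mod (int p ^ n) else 0)"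

definition Iw_mult :: "nat \<Rightarrow> nat \<Rightarrow> elt \<Rightarrow> elt \<Rightarrow> elt" where
  "Iw_mult p d \<mu> \<nu> = (\<lambda>n c. if c \<in> box p d n then
      (\<Sum>a\<in>box p d n. \<Sum>b\<in>box p d n.
          if vmod p n (\<lambda>i. a i + b i) = c then \<mu> n a * \<nu> n b else 0) mod (int p ^ n)
      else 0)"

definition grp_minus_one :: "nat \<Rightarrow> nat \<Rightarrow> (nat \<Rightarrow> nat \<Rightarrow> int) \<Rightarrow> elt" where
  "grp_minus_one p d g = (\<lambda>n c. if c \<in> box p d n then
      ((if c = lvl g n then 1 else 0) - (if c = (\<lambda>i. 0) then 1 else 0)) mod (int p ^ n)
      else 0)"

text \<open>A basis (y_0,...,y_{d-1}) of X: elements of X that topologically generate X,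
 i.e. the subgroup they generate is dense: its image in every quotient X/p^n X is everything.\<close>
definition is_basis :: "nat \<Rightarrow> nat \<Rightarrow> (nat \<Rightarrow> nat \<Rightarrow> nat \<Rightarrow> int) \<Rightarrow> bool" where
  "is_basis p d y \<longleftrightarrow> (\<forall>j<d. y j \<in> Xgrp p d) \<and>
     (\<forall>n. \<forall>a\<in>box p d n. \<exists>k::nat \<Rightarrow> int.
         a = vmod p n (\<lambda>i. \<Sum>j<d. k j * y j i n))"

fun Iw_sum :: "nat \<Rightarrow> nat \<Rightarrow> (nat \<Rightarrow> elt) \<Rightarrow> nat \<Rightarrow> elt" where
  "Iw_sum p d f 0 = Iw_zero"
| "Iw_sum p d f (Suc m) = Iw_add p d (Iw_sum p d f m) (f m)"

text \<open>(y_1 - 1)R + ... + (y_{d-1} - 1)R, with 0-based indices j < d - 1.\<close>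
definition basis_ideal :: "nat \<Rightarrow> nat \<Rightarrow> (nat \<Rightarrow> nat \<Rightarrow> nat \<Rightarrow> int) \<Rightarrow> elt set" where
  "basis_ideal p d y = {\<mu>. \<exists>r. (\<forall>j<d - 1. r j \<in> Iw p d) \<and>
       \<mu> = Iw_sum p d (\<lambda>j. Iw_mult p d (grp_minus_one p d (y j)) (r j)) (d - 1)}"

end

theory Submission
  imports Defs "HOL-Number_Theory.Cong"
begin

(* An element mu of the intersection lies in the ideal generated by y_1 - 1, ..., y_{d-1} - 1
   for every basis y, so at every level N the sum of its coefficients mu_N(x) over any subset of
   (Z/p^N)^d invariant under translation by y_1, ..., y_{d-1} vanishes mod p^N.  This applies to
   every "slab" {x. p^k dvd phi(x - a)} cut out by a single primitive linear form phi.
   A row operation on a pair of dual bases writes p times the indicator of a lattice cell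
   {x. p^(k_i) dvd phi_i(x - a) for all i} as a signed sum of indicators of cells of smaller
   depth k_1 + ... + k_d, so by induction p^(k_1 + ... + k_d) times the sum of mu_N over any cell
   vanishes mod p^N.  The fibre of (Z/p^N)^d over c in (Z/p^n)^d is a cell of depth d n, and
   mu_n(c) is congruent mod p^n to the sum of mu_N over it; for N = n + d n this gives
   p^n dvd mu_n(c), so the residue mu_n(c) is 0. *)

lemma finite_box: "finite (box p d n)"
proof (rule finite_subset)
  show "box p d n \<subseteq>
      {a. \<forall>i. (i \<in> {..<d} \<longrightarrow> a i \<in> {0..<int p ^ n}) \<and> (i \<notin> {..<d} \<longrightarrow> a i = 0)}"
    by (auto simp: box_def)
qed (rule finite_set_of_finite_funs; simp)

lemma box_mod: "c \<in> box p d n \<Longrightarrow> c i mod int p ^ n = c i"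
  by (cases "i < d") (auto simp: box_def)

lemma vmod_box: "c \<in> box p d n \<Longrightarrow> vmod p n c = c"
  by (simp add: vmod_def box_mod)

lemma vmod_in_box: "0 < p \<Longrightarrow> \<forall>i\<ge>d. x i = 0 \<Longrightarrow> vmod p n x \<in> box p d n"
  by (auto simp: box_def vmod_def)

lemma zero_in_box: "0 < p \<Longrightarrow> (\<lambda>i. 0) \<in> box p d n"
  by (auto simp: box_def)

lemma mod_power_mod: "n \<le> N \<Longrightarrow> x mod (b ^ N) mod (b ^ n) = x mod (b ^ n :: int)"
  by (simp add: mod_mod_cancel le_imp_power_dvd)

lemma vmod_vmod: "n \<le> N \<Longrightarrow> vmod p n (vmod p N x) = vmod p n x"
  by (simp add: vmod_def mod_power_mod)

lemma padic_int_mod: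
  assumes "z \<in> padic_int p" "n \<le> N"
  shows "z N mod int p ^ n = z n"
  using assms(2)
proof (induction N rule: dec_induct)
  case base
  then show ?case using assms(1) by (simp add: padic_int_def)
next
  case (step N)
  then have "z (Suc N) mod int p ^ n = z (Suc N) mod int p ^ N mod int p ^ n"
    by (simp add: mod_power_mod)
  also have "\<dots> = z n" using assms(1) step.IH by (simp add: padic_int_def)
  finally show ?case .
qed

lemma Xgrp_mod: "g \<in> Xgrp p d \<Longrightarrow> n \<le> N \<Longrightarrow> g i N mod int p ^ n = g i n"
  by (cases "i < d") (auto simp: Xgrp_def padic_int_mod)

lemma lvl_in_box: "g \<in> Xgrp p d \<Longrightarrow> lvl g n \<in> box p d n"
  by (auto simp: Xgrp_def padic_int_def lvl_def box_def)

definition translate :: "nat \<Rightarrow> nat \<Rightarrow> (nat \<Rightarrow> nat \<Rightarrow> int) \<Rightarrow> (nat \<Rightarrow> int) \<Rightarrow> (nat \<Rightarrow> int)" where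
  "translate p n g c = vmod p n (\<lambda>i. c i - g i n)"

lemma translate_in_box: "0 < p \<Longrightarrow> g \<in> Xgrp p d \<Longrightarrow> c \<in> box p d n \<Longrightarrow> translate p n g c \<in> box p d n"
  unfolding translate_def by (rule vmod_in_box) (auto simp: box_def Xgrp_def)

lemma inj_on_translate: "inj_on (translate p n g) (box p d n)"
proof (rule inj_onI)
  fix b c assume b: "b \<in> box p d n" and c: "c \<in> box p d n"
    and eq: "translate p n g b = translate p n g c"
  have "b i mod int p ^ n = c i mod int p ^ n" for i
    using fun_cong[OF eq, of i] unfolding translate_def vmod_def
    by (metis diff_add_cancel mod_add_left_eq)
  then show "b = c" using b c by (simp add: box_mod fun_eq_iff)
qed

lemma vmod_translate:
  assumes "g \<in> Xgrp p d" "n \<le> N"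
  shows "vmod p n (translate p N g b) = translate p n g (vmod p n b)"
proof -
  have "(b i - g i N) mod int p ^ N mod int p ^ n = (b i mod int p ^ n - g i n) mod int p ^ n" for i
  proof -
    have "(b i - g i N) mod int p ^ N mod int p ^ n
        = (b i mod int p ^ n - g i N mod int p ^ n) mod int p ^ n"
      using assms(2) by (simp add: mod_power_mod mod_diff_eq)
    then show ?thesis using Xgrp_mod[OF assms] by simp
  qed
  then show ?thesis by (simp add: translate_def vmod_def)
qed

definition fibre :: "nat \<Rightarrow> nat \<Rightarrow> nat \<Rightarrow> nat \<Rightarrow> (nat \<Rightarrow> int) \<Rightarrow> (nat \<Rightarrow> int) set" where
  "fibre p d N n c = {b \<in> box p d N. vmod p n b = c}"

lemma bij_betw_translate_fibre:
  assumes p: "0 < p" and g: "g \<in> Xgrp p d" and c: "c \<in> box p d n" and "n \<le> N"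
  shows "bij_betw (translate p N g) (fibre p d N n c) (fibre p d N n (translate p n g c))"
proof -
  have onto: "translate p N g ` box p d N = box p d N"
    using translate_in_box[OF p g] by (intro endo_inj_surj finite_box inj_on_translate) auto
  have "translate p N g ` fibre p d N n c = fibre p d N n (translate p n g c)"
  proof
    show "translate p N g ` fibre p d N n c \<subseteq> fibre p d N n (translate p n g c)"
      using translate_in_box[OF p g] vmod_translate[OF g \<open>n \<le> N\<close>] by (auto simp: fibre_def)
  next
    show "fibre p d N n (translate p n g c) \<subseteq> translate p N g ` fibre p d N n c"
    proof
      fix b assume "b \<in> fibre p d N n (translate p n g c)"
      then have b: "b \<in> box p d N" "vmod p n b = translate p n g c" by (auto simp: fibre_def)
      then obtain x where x: "x \<in> box p d N" "b = translate p N g x" using onto by blast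
      have "vmod p n x \<in> box p d n" using x(1) p by (intro vmod_in_box) (auto simp: box_def)
      moreover have "translate p n g (vmod p n x) = translate p n g c"
        using b x vmod_translate[OF g \<open>n \<le> N\<close>] by simp
      ultimately have "vmod p n x = c" using inj_on_translate c by (metis inj_onD)
      then show "b \<in> translate p N g ` fibre p d N n c" using x by (auto simp: fibre_def)
    qed
  qed
  then show ?thesis
    by (auto simp: bij_betw_def fibre_def intro: inj_on_subset[OF inj_on_translate])
qed

lemma mod_add_eq_iff:
  fixes x y z m :: int
  assumes "y mod m = y" "z mod m = z"
  shows "(x + y) mod m = z \<longleftrightarrow> y = (z - x) mod m"
proof -
  have "(x + y) mod m = z mod m \<longleftrightarrow> y mod m = (z - x) mod m"
    by (simp add: mod_eq_dvd_iff algebra_simps)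
  then show ?thesis using assms by simp
qed

lemma sum_box_add_eq:
  assumes "a \<in> box p d n" "c \<in> box p d n" "0 < p"
  shows "(\<Sum>b\<in>box p d n. if vmod p n (\<lambda>i. a i + b i) = c then h b else 0) = h (vmod p n (\<lambda>i. c i - a i))"
proof -
  have "vmod p n (\<lambda>i. a i + b i) = c \<longleftrightarrow> b = vmod p n (\<lambda>i. c i - a i)" if "b \<in> box p d n" for b
    using that assms(2) by (simp add: vmod_def fun_eq_iff mod_add_eq_iff box_mod)
  moreover have "vmod p n (\<lambda>i. c i - a i) \<in> box p d n"
    using assms by (intro vmod_in_box) (auto simp: box_def)
  ultimately show ?thesis by (simp add: finite_box cong: sum.cong)
qed

lemma Iw_mult_grp_minus_one:
  assumes p: "0 < p" and g: "g \<in> Xgrp p d" and c: "c \<in> box p d n"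
  shows "Iw_mult p d (grp_minus_one p d g) r n c = (r n (translate p n g c) - r n c) mod int p ^ n"
proof -
  let ?B = "box p d n" and ?M = "int p ^ n"
  let ?h = "\<lambda>a. r n (vmod p n (\<lambda>i. c i - a i))"
  have "[(\<Sum>a\<in>?B. \<Sum>b\<in>?B. if vmod p n (\<lambda>i. a i + b i) = c then grp_minus_one p d g n a * r n b else 0)
      = (\<Sum>a\<in>?B. (of_bool (a = lvl g n) - of_bool (a = (\<lambda>i. 0))) * ?h a)] (mod ?M)"
  proof (rule cong_sum)
    fix a assume a: "a \<in> ?B"
    have "[grp_minus_one p d g n a = of_bool (a = lvl g n) - of_bool (a = (\<lambda>i. 0))] (mod ?M)"
      using a by (simp add: grp_minus_one_def)
    then show "[(\<Sum>b\<in>?B. if vmod p n (\<lambda>i. a i + b i) = c then grp_minus_one p d g n a * r n b else 0)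
        = (of_bool (a = lvl g n) - of_bool (a = (\<lambda>i. 0))) * ?h a] (mod ?M)"
      using sum_box_add_eq[OF a c p, of "\<lambda>b. grp_minus_one p d g n a * r n b"]
      by (simp add: cong_scalar_right)
  qed
  also have "(\<Sum>a\<in>?B. (of_bool (a = lvl g n) - of_bool (a = (\<lambda>i. 0))) * ?h a) = ?h (lvl g n) - ?h (\<lambda>i. 0)"
    using lvl_in_box[OF g] zero_in_box[OF p]
    by (simp add: left_diff_distrib sum_subtractf finite_box Int_def Collect_conv_if)
  finally show ?thesis
    using c by (simp add: Iw_mult_def cong_def translate_def lvl_def vmod_box)
qed

lemma Iw_sum_apply: "c \<in> box p d n \<Longrightarrow> Iw_sum p d f m n c = (\<Sum>j<m. f j n c) mod int p ^ n"
  by (induction m) (simp_all add: Iw_zero_def Iw_add_def mod_add_left_eq)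

lemma Iw_sum_outside_box: "c \<notin> box p d n \<Longrightarrow> Iw_sum p d f m n c = 0"
  by (induction m) (simp_all add: Iw_zero_def Iw_add_def)

lemma basis_idealE:
  assumes p: "0 < p" and y: "\<forall>j<d - 1. y j \<in> Xgrp p d" and "\<mu> \<in> basis_ideal p d y"
  obtains r where "\<forall>j<d - 1. r j \<in> Iw p d"
    "\<And>n c. c \<in> box p d n \<Longrightarrow>
       \<mu> n c = (\<Sum>j<d - 1. r j n (translate p n (y j) c) - r j n c) mod int p ^ n"
proof -
  obtain r where r: "\<forall>j<d - 1. r j \<in> Iw p d"
    and \<mu>: "\<mu> = Iw_sum p d (\<lambda>j. Iw_mult p d (grp_minus_one p d (y j)) (r j)) (d - 1)"
    using assms(3) by (auto simp: basis_ideal_def)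
  have "\<mu> n c = (\<Sum>j<d - 1. r j n (translate p n (y j) c) - r j n c) mod int p ^ n"
    if c: "c \<in> box p d n" for n c
    unfolding \<mu> Iw_sum_apply[OF c] using y
    by (simp add: Iw_mult_grp_minus_one[OF p _ c] mod_sum_eq)
  with r show thesis by (rule that)
qed

lemma basis_ideal_outside_box: "\<mu> \<in> basis_ideal p d y \<Longrightarrow> c \<notin> box p d n \<Longrightarrow> \<mu> n c = 0"
  by (auto simp: basis_ideal_def Iw_sum_outside_box)

lemma basis_ideal_mod: "\<mu> \<in> basis_ideal p d y \<Longrightarrow> \<mu> n c mod int p ^ n = \<mu> n c"
  by (cases "c \<in> box p d n") (auto simp: basis_ideal_def Iw_sum_apply Iw_sum_outside_box)

lemma Iw_zero_mem_basis_ideal: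
  assumes "0 < p"
  shows "Iw_zero \<in> basis_ideal p d y"
proof -
  have mult_zero: "Iw_mult p d \<nu> Iw_zero = Iw_zero" for \<nu>
    unfolding Iw_mult_def Iw_zero_def by (intro ext) (simp cong: if_cong)
  have "Iw_sum p d (\<lambda>j. Iw_mult p d (grp_minus_one p d (y j)) Iw_zero) m = Iw_zero" for m
    using mult_zero by (induction m) (simp_all add: Iw_add_def Iw_zero_def fun_eq_iff)
  moreover have "Iw_zero \<in> Iw p d" using assms by (simp add: Iw_def Iw_zero_def)
  ultimately show ?thesis by (auto simp: basis_ideal_def)
qed

section \<open>Compatible families\<close>

text \<open>The defining congruences of \<^const>\<open>Iw\<close> without normalised representatives; unlike
  membership in \<^const>\<open>Iw\<close>, they survive pointwise sums, differences and translations.\<close>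

definition compatible :: "nat \<Rightarrow> nat \<Rightarrow> elt \<Rightarrow> bool" where
  "compatible p d \<nu> \<longleftrightarrow> (\<forall>n. \<forall>c\<in>box p d n.
     [\<nu> n c = (\<Sum>b\<in>fibre p d (Suc n) n c. \<nu> (Suc n) b)] (mod int p ^ n))"

lemma compatible_Iw:
  assumes "\<nu> \<in> Iw p d"
  shows "compatible p d \<nu>"
  unfolding compatible_def fibre_def
proof (intro allI ballI)
  fix n c assume "c \<in> box p d n"
  then have "\<nu> n c = (\<Sum>b\<in>{b \<in> box p d (Suc n). vmod p n b = c}. \<nu> (Suc n) b) mod int p ^ n"
    using assms unfolding Iw_def by blast
  then show "[\<nu> n c = (\<Sum>b\<in>{b \<in> box p d (Suc n). vmod p n b = c}. \<nu> (Suc n) b)] (mod int p ^ n)"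
    by simp
qed

lemma compatible_cong_box:
  "(\<And>n c. c \<in> box p d n \<Longrightarrow> \<nu> n c = \<nu>' n c) \<Longrightarrow> compatible p d \<nu>' \<Longrightarrow> compatible p d \<nu>"
  by (simp add: compatible_def fibre_def)

lemma compatible_translate:
  assumes p: "0 < p" and g: "g \<in> Xgrp p d" and "compatible p d \<nu>"
  shows "compatible p d (\<lambda>n c. \<nu> n (translate p n g c))"
  unfolding compatible_def
proof (intro allI ballI)
  fix n c assume c: "c \<in> box p d n"
  have "[\<nu> n (translate p n g c) = (\<Sum>b\<in>fibre p d (Suc n) n (translate p n g c). \<nu> (Suc n) b)] (mod int p ^ n)"
    using assms(3) translate_in_box[OF p g c] by (simp add: compatible_def)
  also have "(\<Sum>b\<in>fibre p d (Suc n) n (translate p n g c). \<nu> (Suc n) b)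
      = (\<Sum>b\<in>fibre p d (Suc n) n c. \<nu> (Suc n) (translate p (Suc n) g b))"
    by (rule sum.reindex_bij_betw[symmetric], rule bij_betw_translate_fibre[OF p g c]) simp
  finally show "[\<nu> n (translate p n g c) = (\<Sum>b\<in>fibre p d (Suc n) n c. \<nu> (Suc n) (translate p (Suc n) g b))] (mod int p ^ n)" .
qed

lemma compatible_diff:
  "compatible p d \<nu> \<Longrightarrow> compatible p d \<nu>' \<Longrightarrow> compatible p d (\<lambda>n c. \<nu> n c - \<nu>' n c)"
  by (simp add: compatible_def sum_subtractf cong_diff)

lemma compatible_sum:
  "(\<And>j. j \<in> J \<Longrightarrow> compatible p d (\<nu> j)) \<Longrightarrow> compatible p d (\<lambda>n c. \<Sum>j\<in>J. \<nu> j n c)"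
  unfolding compatible_def by (subst sum.swap) (blast intro: cong_sum)

lemma compatible_mod:
  assumes "compatible p d \<nu>"
  shows "compatible p d (\<lambda>n c. \<nu> n c mod int p ^ n)"
  unfolding compatible_def
proof (intro allI ballI)
  fix n c assume "c \<in> box p d n"
  then have "[\<nu> n c = (\<Sum>b\<in>fibre p d (Suc n) n c. \<nu> (Suc n) b)] (mod int p ^ n)"
    using assms by (simp add: compatible_def)
  also have "[(\<Sum>b\<in>fibre p d (Suc n) n c. \<nu> (Suc n) b)
      = (\<Sum>b\<in>fibre p d (Suc n) n c. \<nu> (Suc n) b mod int p ^ Suc n)] (mod int p ^ n)"
    by (rule cong_sum, rule cong_dvd_modulus[of _ _ "int p ^ Suc n"]) (simp_all add: le_imp_power_dvd)
  finally show "[\<nu> n c mod int p ^ n = (\<Sum>b\<in>fibre p d (Suc n) n c. \<nu> (Suc n) b mod int p ^ Suc n)] (mod int p ^ n)"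
    by simp
qed

lemma compatible_basis_ideal:
  assumes p: "0 < p" and y: "\<forall>j<d - 1. y j \<in> Xgrp p d" and \<mu>: "\<mu> \<in> basis_ideal p d y"
  shows "compatible p d \<mu>"
proof -
  obtain r where r: "\<forall>j<d - 1. r j \<in> Iw p d" and
    \<mu>_eq: "\<And>n c. c \<in> box p d n \<Longrightarrow>
       \<mu> n c = (\<Sum>j<d - 1. r j n (translate p n (y j) c) - r j n c) mod int p ^ n"
    using basis_idealE[OF p y \<mu>] by blast
  show ?thesis
    using r y
    by (intro compatible_cong_box[OF \<mu>_eq] compatible_mod compatible_sum compatible_diff
        compatible_translate[OF p] compatible_Iw) auto
qed

lemma finite_fibre: "finite (fibre p d N n c)"
  using finite_box by (simp add: fibre_def)

lemma vmod_fibre_subset: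
  "0 < p \<Longrightarrow> n \<le> N \<Longrightarrow> vmod p N ` fibre p d M n c \<subseteq> fibre p d N n c"
  by (auto simp: fibre_def vmod_vmod intro!: vmod_in_box) (simp add: box_def)

lemma fibre_fibre:
  "n \<le> N \<Longrightarrow> c' \<in> fibre p d N n c \<Longrightarrow> {b \<in> fibre p d M n c. vmod p N b = c'} = fibre p d M N c'"
  by (auto simp: fibre_def) (metis vmod_vmod)

lemma compatible_fibre_sum:
  assumes p: "0 < p" and \<nu>: "compatible p d \<nu>" and c: "c \<in> box p d n" and "n \<le> N"
  shows "[\<nu> n c = (\<Sum>b\<in>fibre p d N n c. \<nu> N b)] (mod int p ^ n)"
  using \<open>n \<le> N\<close>
proof (induction N rule: dec_induct)
  case base
  have "fibre p d n n c = {c}" using c by (auto simp: fibre_def vmod_box)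
  then show ?case by simp
next
  case (step N)
  note step.IH
  also have "[(\<Sum>c'\<in>fibre p d N n c. \<nu> N c')
      = (\<Sum>c'\<in>fibre p d N n c. \<Sum>b\<in>fibre p d (Suc N) N c'. \<nu> (Suc N) b)] (mod int p ^ n)"
  proof (rule cong_sum, rule cong_dvd_modulus)
    fix c' assume "c' \<in> fibre p d N n c"
    then show "[\<nu> N c' = (\<Sum>b\<in>fibre p d (Suc N) N c'. \<nu> (Suc N) b)] (mod int p ^ N)"
      using \<nu> by (simp add: compatible_def fibre_def)
    show "int p ^ n dvd int p ^ N" using step.hyps by (simp add: le_imp_power_dvd)
  qed
  also have "(\<Sum>c'\<in>fibre p d N n c. \<Sum>b\<in>fibre p d (Suc N) N c'. \<nu> (Suc N) b)
      = (\<Sum>c'\<in>fibre p d N n c. \<Sum>b\<in>{b \<in> fibre p d (Suc N) n c. vmod p N b = c'}. \<nu> (Suc N) b)"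
    using step.hyps(1) by (intro sum.cong) (simp_all add: fibre_fibre)
  also have "\<dots> = (\<Sum>b\<in>fibre p d (Suc N) n c. \<nu> (Suc N) b)"
    by (rule sum.group[OF finite_fibre finite_fibre vmod_fibre_subset[OF p step.hyps(1)]])
  finally show ?case .
qed

lemma basis_ideal_sum_invariant_dvd:
  assumes p: "0 < p" and y: "\<forall>j<d - 1. y j \<in> Xgrp p d" and \<mu>: "\<mu> \<in> basis_ideal p d y"
    and S: "S \<subseteq> box p d N" and inv: "\<forall>j<d - 1. translate p N (y j) ` S \<subseteq> S"
  shows "int p ^ N dvd (\<Sum>x\<in>S. \<mu> N x)"
proof -
  obtain r where "\<forall>j<d - 1. r j \<in> Iw p d" and
    \<mu>_eq: "\<And>n c. c \<in> box p d n \<Longrightarrow>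
       \<mu> n c = (\<Sum>j<d - 1. r j n (translate p n (y j) c) - r j n c) mod int p ^ n"
    using basis_idealE[OF p y \<mu>] by blast
  have fin: "finite S" using S finite_box by (rule finite_subset)
  have "[(\<Sum>x\<in>S. \<mu> N x) = (\<Sum>x\<in>S. \<Sum>j<d - 1. r j N (translate p N (y j) x) - r j N x)] (mod int p ^ N)"
    using S by (intro cong_sum) (auto simp: \<mu>_eq)
  also have "(\<Sum>x\<in>S. \<Sum>j<d - 1. r j N (translate p N (y j) x) - r j N x)
      = (\<Sum>j<d - 1. \<Sum>x\<in>S. r j N (translate p N (y j) x) - r j N x)"
    by (rule sum.swap)
  also have "\<dots> = (\<Sum>j<d - 1. (\<Sum>x\<in>S. r j N (translate p N (y j) x)) - (\<Sum>x\<in>S. r j N x))"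
    by (simp add: sum_subtractf)
  also have "\<dots> = 0"
  proof (intro sum.neutral ballI)
    fix j assume "j \<in> {..<d - 1}"
    moreover have inj: "inj_on (translate p N (y j)) S"
      using S by (rule inj_on_subset[OF inj_on_translate])
    ultimately have "translate p N (y j) ` S = S"
      using inv fin by (intro endo_inj_surj) auto
    then show "(\<Sum>x\<in>S. r j N (translate p N (y j) x)) - (\<Sum>x\<in>S. r j N x) = 0"
      using sum.reindex[OF inj, of "r j N"] by simp
  qed
  finally show ?thesis by (simp add: cong_0_iff)
qed

section \<open>Dual bases and lattice cells\<close>

text \<open>\<open>F\<close> and the transpose of \<open>E\<close> are mutually inverse integer matrices: the rows of
  \<open>E\<close> form a basis of \<open>\<int>\<^sup>d\<close> and the rows of \<open>F\<close> its dual basis.\<close>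

definition dual_bases :: "nat \<Rightarrow> (nat \<Rightarrow> nat \<Rightarrow> int) \<Rightarrow> (nat \<Rightarrow> nat \<Rightarrow> int) \<Rightarrow> bool" where
  "dual_bases d F E \<longleftrightarrow>
     (\<forall>i<d. \<forall>j<d. (\<Sum>l<d. F i l * E j l) = of_bool (i = j)) \<and>
     (\<forall>i<d. \<forall>l<d. (\<Sum>m<d. E m i * F m l) = of_bool (i = l))"

lemma dual_bases_id: "dual_bases d (\<lambda>i l. of_bool (i = l)) (\<lambda>i l. of_bool (i = l))"
  by (simp add: dual_bases_def)

lemma dual_bases_row_op:
  assumes "dual_bases d F E" and ij: "i < d" "j < d" "i \<noteq> j"
  shows "dual_bases d (F(i := \<lambda>l. F i l + t * F j l)) (E(j := \<lambda>l. E j l - t * E i l))"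
proof -
  let ?F = "F(i := \<lambda>l. F i l + t * F j l)" and ?E = "E(j := \<lambda>l. E j l - t * E i l)"
  have FE: "(\<Sum>l<d. F a l * E b l) = of_bool (a = b)" if "a < d" "b < d" for a b
    using assms(1) that by (simp add: dual_bases_def)
  have EF: "(\<Sum>m<d. E m a * F m b) = of_bool (a = b)" if "a < d" "b < d" for a b
    using assms(1) that by (simp add: dual_bases_def)
  have "(\<Sum>l<d. ?F a l * ?E b l) = of_bool (a = b)" if "a < d" "b < d" for a b
  proof -
    define u where "u = (if a = i then t else 0)"
    define v where "v = (if b = j then t else 0)"
    have "?F a l * ?E b l = F a l * E b l + u * (F j l * E b l) - v * (F a l * E i l)
        - u * v * (F j l * E i l)" for l
      using ij(3) by (simp add: u_def v_def algebra_simps)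
    then have "(\<Sum>l<d. ?F a l * ?E b l) = (\<Sum>l<d. F a l * E b l) + u * (\<Sum>l<d. F j l * E b l)
        - v * (\<Sum>l<d. F a l * E i l) - u * v * (\<Sum>l<d. F j l * E i l)"
      by (simp add: sum.distrib sum_subtractf sum_distrib_left)
    also have "\<dots> = of_bool (a = b)"
      using that ij by (auto simp: FE u_def v_def)
    finally show ?thesis .
  qed
  moreover have "(\<Sum>m<d. ?E m a * ?F m b) = of_bool (a = b)" if "a < d" "b < d" for a b
  proof -
    have "?E m a * ?F m b = E m a * F m b + (if m = i then t * E i a * F j b else 0)
        - (if m = j then t * E i a * F j b else 0)" for m
      using ij(3) by (simp add: algebra_simps)
    then have "(\<Sum>m<d. ?E m a * ?F m b) = (\<Sum>m<d. E m a * F m b)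
        + t * E i a * F j b - t * E i a * F j b"
      using ij(1,2) by (simp add: sum.distrib sum_subtractf)
    also have "\<dots> = of_bool (a = b)" using that by (simp add: EF)
    finally show ?thesis .
  qed
  ultimately show ?thesis by (simp add: dual_bases_def)
qed

text \<open>The rows of \<open>E\<close> as a basis of \<open>X\<close>, ordered so that row \<open>i0\<close> comes last and is
  therefore the one not among the generators of \<^const>\<open>basis_ideal\<close>.\<close>

definition rows_basis :: "nat \<Rightarrow> nat \<Rightarrow> (nat \<Rightarrow> nat \<Rightarrow> int) \<Rightarrow> nat \<Rightarrow> nat \<Rightarrow> nat \<Rightarrow> nat \<Rightarrow> int" where
  "rows_basis p d E i0 =
     (\<lambda>j i n. if i < d then E ((id(i0 := d - 1, d - 1 := i0)) j) i mod int p ^ n else 0)"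

lemma rows_basis_in_Xgrp: "0 < p \<Longrightarrow> rows_basis p d E i0 j \<in> Xgrp p d"
  by (simp add: rows_basis_def Xgrp_def padic_int_def mod_mod_cancel)

lemma is_basis_rows_basis:
  assumes p: "0 < p" and FE: "dual_bases d F E" and i0: "i0 < d"
  shows "is_basis p d (rows_basis p d E i0)"
  unfolding is_basis_def
proof (intro conjI allI ballI impI exI)
  fix j show "rows_basis p d E i0 j \<in> Xgrp p d" by (rule rows_basis_in_Xgrp[OF p])
next
  fix n a assume a: "a \<in> box p d n"
  let ?\<sigma> = "id(i0 := d - 1, d - 1 := i0)" and ?M = "int p ^ n"
  have \<sigma>: "bij_betw ?\<sigma> {..<d} {..<d}"
    using i0 by (intro bij_betw_byWitness[where f' = ?\<sigma>]) auto
  define k where "k j = (\<Sum>l<d. F (?\<sigma> j) l * a l)" for j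
  have "(\<Sum>j<d. k j * rows_basis p d E i0 j i n) mod ?M = a i" for i
  proof (cases "i < d")
    case True
    have "[(\<Sum>j<d. k j * rows_basis p d E i0 j i n) = (\<Sum>j<d. k j * E (?\<sigma> j) i)] (mod ?M)"
      using True by (intro cong_sum cong_scalar_left) (simp add: rows_basis_def)
    also have "(\<Sum>j<d. k j * E (?\<sigma> j) i) = (\<Sum>m<d. (\<Sum>l<d. F m l * a l) * E m i)"
      using sum.reindex_bij_betw[OF \<sigma>, of "\<lambda>m. (\<Sum>l<d. F m l * a l) * E m i"] by (simp add: k_def)
    also have "\<dots> = (\<Sum>m<d. \<Sum>l<d. a l * (E m i * F m l))"
      by (simp add: sum_distrib_left sum_distrib_right mult_ac)
    also have "\<dots> = (\<Sum>l<d. a l * (\<Sum>m<d. E m i * F m l))"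
      by (subst sum.swap) (simp add: sum_distrib_left)
    also have "\<dots> = a i"
      using FE True by (simp add: dual_bases_def)
    finally show ?thesis using a by (simp add: cong_def box_mod)
  next
    case False
    then show ?thesis using a by (simp add: rows_basis_def box_def)
  qed
  then show "a = vmod p n (\<lambda>i. \<Sum>j<d. k j * rows_basis p d E i0 j i n)"
    by (simp add: vmod_def fun_eq_iff)
qed

definition coord :: "nat \<Rightarrow> (nat \<Rightarrow> nat \<Rightarrow> int) \<Rightarrow> (nat \<Rightarrow> int) \<Rightarrow> nat \<Rightarrow> (nat \<Rightarrow> int) \<Rightarrow> int" where
  "coord d F a i x = (\<Sum>l<d. F i l * (x l - a l))"

text \<open>For dual bases this is the coset of \<open>a\<close> modulo the lattice spanned by the
  vectors \<open>p ^ k i \<cdot> E i\<close>.\<close>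

definition cell :: "nat \<Rightarrow> nat \<Rightarrow> (nat \<Rightarrow> nat \<Rightarrow> int) \<Rightarrow> (nat \<Rightarrow> int) \<Rightarrow> (nat \<Rightarrow> nat) \<Rightarrow> (nat \<Rightarrow> int) set" where
  "cell p d F a k = {x. \<forall>i<d. int p ^ k i dvd coord d F a i x}"

lemma translate_mem_cell:
  assumes k: "\<forall>i<d. k i \<le> N" and g: "\<forall>i<d. int p ^ k i dvd (\<Sum>l<d. F i l * g l N)"
    and x: "x \<in> cell p d F a k"
  shows "translate p N g x \<in> cell p d F a k"
  unfolding cell_def
proof (intro CollectI allI impI)
  fix i assume i: "i < d"
  have "[coord d F a i (translate p N g x) = (\<Sum>l<d. F i l * (x l - g l N - a l))] (mod int p ^ N)"
    unfolding coord_def translate_def vmod_def by (intro cong_sum cong_scalar_left cong_diff) simp_all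
  also have "(\<Sum>l<d. F i l * (x l - g l N - a l)) = coord d F a i x - (\<Sum>l<d. F i l * g l N)"
    unfolding coord_def sum_subtractf[symmetric] by (rule sum.cong) (simp_all add: algebra_simps)
  finally have "[coord d F a i (translate p N g x) = coord d F a i x - (\<Sum>l<d. F i l * g l N)] (mod int p ^ k i)"
    by (rule cong_dvd_modulus) (use k i in \<open>simp add: le_imp_power_dvd\<close>)
  moreover have "int p ^ k i dvd coord d F a i x - (\<Sum>l<d. F i l * g l N)"
    using g x i by (simp add: cell_def)
  ultimately show "int p ^ k i dvd coord d F a i (translate p N g x)"
    by (simp add: cong_dvd_iff)
qed

lemma sum_cell_dvd_single:
  assumes p: "0 < p" and \<mu>: "\<forall>y. is_basis p d y \<longrightarrow> \<mu> \<in> basis_ideal p d y"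
    and FE: "dual_bases d F E" and i0: "i0 < d"
    and k: "\<forall>i<d. i \<noteq> i0 \<longrightarrow> k i = 0" "k i0 \<le> N"
  shows "int p ^ N dvd sum (\<mu> N) (box p d N \<inter> cell p d F a k)"
proof (rule basis_ideal_sum_invariant_dvd[OF p])
  let ?y = "rows_basis p d E i0"
  show y: "\<forall>j<d - 1. ?y j \<in> Xgrp p d" using rows_basis_in_Xgrp[OF p] by blast
  show "\<mu> \<in> basis_ideal p d ?y" using \<mu> is_basis_rows_basis[OF p FE i0] by blast
  show "box p d N \<inter> cell p d F a k \<subseteq> box p d N" by blast
  show "\<forall>j<d - 1. translate p N (?y j) ` (box p d N \<inter> cell p d F a k) \<subseteq> box p d N \<inter> cell p d F a k"
  proof (intro allI impI image_subsetI IntI)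
    fix j x assume j: "j < d - 1" and x: "x \<in> box p d N \<inter> cell p d F a k"
    then show "translate p N (?y j) x \<in> box p d N"
      using translate_in_box[OF p] y by blast
    let ?m = "(id(i0 := d - 1, d - 1 := i0)) j"
    have m: "?m < d" "?m \<noteq> i0" using j i0 by auto
    have "int p ^ k i dvd (\<Sum>l<d. F i l * ?y j l N)" if i: "i < d" for i
    proof (cases "i = i0")
      case True
      have "[(\<Sum>l<d. F i l * ?y j l N) = (\<Sum>l<d. F i l * E ?m l)] (mod int p ^ N)"
        by (intro cong_sum cong_scalar_left) (simp add: rows_basis_def)
      moreover have "(\<Sum>l<d. F i l * E ?m l) = 0" using FE True i m by (simp add: dual_bases_def)
      ultimately have "int p ^ N dvd (\<Sum>l<d. F i l * ?y j l N)" by (simp add: cong_0_iff)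
      then show ?thesis using k(2) True by (meson dvd_trans le_imp_power_dvd)
    qed (use k i in simp)
    moreover have "\<forall>i<d. k i \<le> N" using k by (metis le0)
    ultimately show "translate p N (?y j) x \<in> cell p d F a k"
      using x by (blast intro: translate_mem_cell)
  qed
qed

section \<open>Divisibility of cell sums\<close>

lemma sum_of_bool_dvd_linear_eq_1:
  fixes u v :: int
  assumes p: "prime p" and v: "\<not> int p dvd v"
  shows "(\<Sum>c<p. of_bool (int p dvd u + int c * v)) = (1::int)"
proof -
  have pp: "prime (int p)" using p by simp
  have unique: "c1 = c2"
    if "c1 < p" "c2 < p" "int p dvd u + int c1 * v" "int p dvd u + int c2 * v" for c1 c2
  proof -
    have "int p dvd (int c1 - int c2) * v"
      using dvd_diff[OF that(3,4)] by (simp add: algebra_simps)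
    then have "int p dvd int c1 - int c2" using pp v by (simp add: prime_dvd_mult_iff)
    moreover have "\<bar>int c1 - int c2\<bar> < int p" using that(1,2) by auto
    ultimately show ?thesis using dvd_imp_le_int[of "int c1 - int c2" "int p"] by auto
  qed
  obtain w where w: "[v * w = 1] (mod int p)"
    using cong_solve_coprime_int prime_imp_coprime[OF pp v] by (auto simp: coprime_commute)
  define c0 where "c0 = nat ((- u * w) mod int p)"
  have "[u + int c0 * v = u + (- u * w) * v] (mod int p)"
    using p by (intro cong_add cong_mult) (simp_all add: c0_def cong_def prime_gt_0_nat)
  also have "u + (- u * w) * v = u * (1 - v * w)" by (simp add: algebra_simps)
  also have "[u * (1 - v * w) = u * (1 - 1)] (mod int p)"
    using w by (intro cong_mult cong_diff) (simp_all add: cong_sym)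
  finally have "int p dvd u + int c0 * v" by (simp add: cong_0_iff)
  moreover have "c0 < p" using p by (simp add: c0_def nat_less_iff prime_gt_0_nat)
  ultimately have "{..<p} \<inter> {c. int p dvd u + int c * v} = {c0}" using unique by auto
  then show ?thesis by simp
qed

lemma of_bool_dvd_prime_eq:
  fixes u v :: int
  assumes "prime p"
  shows "int p * of_bool (int p dvd u \<and> int p dvd v)
    = (\<Sum>c<p. of_bool (int p dvd u + int c * v)) + of_bool (int p dvd v) - 1"
proof (cases "int p dvd v")
  case True
  then have "(\<Sum>c<p. of_bool (int p dvd u + int c * v)) = (\<Sum>c<p. of_bool (int p dvd u) :: int)"
    by (intro sum.cong) (simp_all add: dvd_add_left_iff)
  then show ?thesis using True by simp
next
  case False
  then show ?thesis using sum_of_bool_dvd_linear_eq_1[OF assms False] by simp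
qed

lemma of_bool_dvd_prime_power_eq:
  fixes u v :: int
  assumes p: "prime p" and "b \<le> a"
  shows "int p * of_bool (int p ^ Suc a dvd u \<and> int p ^ Suc b dvd v)
    = (\<Sum>c<p. of_bool (int p ^ Suc a dvd u + int c * int p ^ (a - b) * v \<and> int p ^ b dvd v))
      + of_bool (int p ^ a dvd u \<and> int p ^ Suc b dvd v) - of_bool (int p ^ a dvd u \<and> int p ^ b dvd v)"
proof -
  let ?P = "int p"
  have P0: "?P \<noteq> 0" using p by simp
  have shift: "?P ^ (a - b) * ?P ^ b = ?P ^ a" using \<open>b \<le> a\<close> by (simp flip: power_add)
  show ?thesis
  proof (cases "?P ^ a dvd u \<and> ?P ^ b dvd v")
    case False
    have "\<not> (?P ^ Suc a dvd u + int c * ?P ^ (a - b) * v \<and> ?P ^ b dvd v)" for c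
    proof
      assume H: "?P ^ Suc a dvd u + int c * ?P ^ (a - b) * v \<and> ?P ^ b dvd v"
      then have "?P ^ a dvd int c * ?P ^ (a - b) * v"
        by (metis shift dvd_mult mult.assoc mult_dvd_mono dvd_refl)
      moreover have "?P ^ a dvd u + int c * ?P ^ (a - b) * v"
        using H by (meson dvd_trans le_imp_power_dvd le_SucI order_refl)
      ultimately have "?P ^ a dvd u" by (simp add: dvd_add_left_iff)
      with False H show False by blast
    qed
    then have "(\<Sum>c<p. of_bool (?P ^ Suc a dvd u + int c * ?P ^ (a - b) * v \<and> ?P ^ b dvd v)) = (0::int)"
      by (intro sum.neutral) simp
    moreover have "\<not> ?P ^ Suc a dvd u \<or> \<not> ?P ^ Suc b dvd v"
      using False by (meson dvd_trans le_imp_power_dvd le_SucI order_refl)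
    moreover have "\<not> (?P ^ a dvd u \<and> ?P ^ Suc b dvd v)"
      using False by (meson dvd_trans le_imp_power_dvd le_SucI order_refl)
    ultimately show ?thesis using False by simp
  next
    case True
    then obtain u' v' where uv: "u = ?P ^ a * u'" "v = ?P ^ b * v'" by (meson dvdE)
    have "u + int c * ?P ^ (a - b) * v = ?P ^ a * (u' + int c * v')" for c
      using shift by (simp add: uv algebra_simps flip: mult.assoc)
    then have "?P ^ Suc a dvd u + int c * ?P ^ (a - b) * v \<longleftrightarrow> ?P dvd u' + int c * v'" for c
      using P0 by (simp add: power_Suc2 mult.commute[of _ ?P])
    moreover have "?P ^ Suc a dvd u \<longleftrightarrow> ?P dvd u'" "?P ^ Suc b dvd v \<longleftrightarrow> ?P dvd v'"
      using P0 by (simp_all add: uv power_Suc2 mult.commute[of _ ?P])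
    ultimately show ?thesis using True of_bool_dvd_prime_eq[OF p, of u' v'] by simp
  qed
qed

lemma mem_cell_iff_pair:
  assumes "i < d" "j < d" "i \<noteq> j"
  shows "x \<in> cell p d F a k \<longleftrightarrow> (\<forall>l<d. l \<noteq> i \<and> l \<noteq> j \<longrightarrow> int p ^ k l dvd coord d F a l x)
    \<and> int p ^ k i dvd coord d F a i x \<and> int p ^ k j dvd coord d F a j x"
  using assms unfolding cell_def by auto

lemma coord_row_op:
  "coord d (F(i := \<lambda>l. F i l + t * F j l)) a l x
     = (if l = i then coord d F a i x + t * coord d F a j x else coord d F a l x)"
  by (simp add: coord_def distrib_right sum.distrib sum_distrib_left mult.assoc)

lemma of_bool_mem_cell_row_op:
  assumes p: "prime p" and ij: "i < d" "j < d" "i \<noteq> j" and k: "1 \<le> k j" "k j \<le> k i"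
  shows "int p * of_bool (x \<in> cell p d F a k) =
    (\<Sum>c<p. of_bool (x \<in> cell p d (F(i := \<lambda>l. F i l + int c * int p ^ (k i - k j) * F j l)) a (k(j := k j - 1))))
    + of_bool (x \<in> cell p d F a (k(i := k i - 1)))
    - of_bool (x \<in> cell p d F a (k(i := k i - 1, j := k j - 1)))"
proof -
  obtain s t where st: "k i = Suc s" "k j = Suc t" "t \<le> s"
    using k by (intro that[of "k i - 1" "k j - 1"]) auto
  let ?Q = "\<forall>l<d. l \<noteq> i \<and> l \<noteq> j \<longrightarrow> int p ^ k l dvd coord d F a l x"
  let ?u = "coord d F a i x" and ?v = "coord d F a j x"
  have "x \<in> cell p d F a k \<longleftrightarrow> ?Q \<and> int p ^ Suc s dvd ?u \<and> int p ^ Suc t dvd ?v"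
    using st by (simp add: mem_cell_iff_pair[OF ij])
  moreover have "x \<in> cell p d (F(i := \<lambda>l. F i l + int c * int p ^ (k i - k j) * F j l)) a (k(j := k j - 1))
      \<longleftrightarrow> ?Q \<and> int p ^ Suc s dvd ?u + int c * int p ^ (s - t) * ?v \<and> int p ^ t dvd ?v" for c
    using st ij by (simp add: mem_cell_iff_pair[OF ij] coord_row_op)
  moreover have "x \<in> cell p d F a (k(i := k i - 1)) \<longleftrightarrow> ?Q \<and> int p ^ s dvd ?u \<and> int p ^ Suc t dvd ?v"
    using st ij by (simp add: mem_cell_iff_pair[OF ij])
  moreover have "x \<in> cell p d F a (k(i := k i - 1, j := k j - 1)) \<longleftrightarrow> ?Q \<and> int p ^ s dvd ?u \<and> int p ^ t dvd ?v"
    using st ij by (simp add: mem_cell_iff_pair[OF ij])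
  ultimately show ?thesis
    using of_bool_dvd_prime_power_eq[OF p st(3), of ?u ?v] by (cases ?Q) simp_all
qed

lemma sum_cell_row_op:
  assumes "finite B" "prime p" "i < d" "j < d" "i \<noteq> j" "1 \<le> k j" "k j \<le> k i"
  shows "int p * sum f (B \<inter> cell p d F a k) =
    (\<Sum>c<p. sum f (B \<inter> cell p d (F(i := \<lambda>l. F i l + int c * int p ^ (k i - k j) * F j l)) a (k(j := k j - 1))))
    + sum f (B \<inter> cell p d F a (k(i := k i - 1)))
    - sum f (B \<inter> cell p d F a (k(i := k i - 1, j := k j - 1)))"
proof -
  have restrict: "sum f (B \<inter> C) = (\<Sum>x\<in>B. of_bool (x \<in> C) * f x)" for C
    using assms(1) by simp
  let ?C = "\<lambda>c. cell p d (F(i := \<lambda>l. F i l + int c * int p ^ (k i - k j) * F j l)) a (k(j := k j - 1))"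
  let ?C1 = "cell p d F a (k(i := k i - 1))" and ?C2 = "cell p d F a (k(i := k i - 1, j := k j - 1))"
  have "int p * sum f (B \<inter> cell p d F a k) = (\<Sum>x\<in>B. (int p * of_bool (x \<in> cell p d F a k)) * f x)"
    by (simp add: restrict sum_distrib_left mult.assoc)
  also have "\<dots> = (\<Sum>x\<in>B. ((\<Sum>c<p. of_bool (x \<in> ?C c)) + of_bool (x \<in> ?C1) - of_bool (x \<in> ?C2)) * f x)"
    by (simp only: of_bool_mem_cell_row_op[OF assms(2-7)])
  also have "\<dots> = (\<Sum>x\<in>B. \<Sum>c<p. of_bool (x \<in> ?C c) * f x)
      + (\<Sum>x\<in>B. of_bool (x \<in> ?C1) * f x) - (\<Sum>x\<in>B. of_bool (x \<in> ?C2) * f x)"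
    by (simp only: left_diff_distrib distrib_right sum_distrib_right sum.distrib sum_subtractf)
  also have "(\<Sum>x\<in>B. \<Sum>c<p. of_bool (x \<in> ?C c) * f x) = (\<Sum>c<p. \<Sum>x\<in>B. of_bool (x \<in> ?C c) * f x)"
    by (rule sum.swap)
  finally show ?thesis by (simp only: restrict)
qed

lemma sum_fun_upd_decrement:
  fixes k :: "nat \<Rightarrow> nat"
  assumes "j < d" "0 < k j"
  shows "Suc (\<Sum>l<d. (k(j := k j - 1)) l) = (\<Sum>l<d. k l)"
proof -
  have "(\<Sum>l<d. (k(j := k j - 1)) l) = (k j - 1) + (\<Sum>l\<in>{..<d} - {j}. k l)"
    using assms(1) by (simp add: sum.remove[of "{..<d}" j])
  moreover have "(\<Sum>l<d. k l) = k j + (\<Sum>l\<in>{..<d} - {j}. k l)"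
    using assms(1) by (simp add: sum.remove[of "{..<d}" j])
  ultimately show ?thesis using assms(2) by simp
qed

lemma two_positive_entriesE:
  fixes k :: "nat \<Rightarrow> nat"
  assumes "0 < d" "\<not> (\<exists>i0<d. \<forall>i<d. i \<noteq> i0 \<longrightarrow> k i = 0)"
  obtains i j where "i < d" "j < d" "i \<noteq> j" "1 \<le> k j" "k j \<le> k i"
proof -
  obtain i where i: "i < d" "k i \<noteq> 0" using assms by blast
  obtain j where j: "j < d" "j \<noteq> i" "k j \<noteq> 0" using assms(2) i(1) by blast
  show thesis
  proof (cases "k j \<le> k i")
    case True
    then show thesis using that[of i j] i j by simp
  next
    case False
    then show thesis using that[of j i] i j by simp
  qed
qed

lemma sum_cell_dvd:
  fixes f :: "(nat \<Rightarrow> int) \<Rightarrow> int"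
  assumes p: "prime p" and d: "0 < d" and B: "finite B"
    and single: "\<And>F E k i0. dual_bases d F E \<Longrightarrow> i0 < d \<Longrightarrow> \<forall>i<d. i \<noteq> i0 \<longrightarrow> k i = 0 \<Longrightarrow> k i0 \<le> N
      \<Longrightarrow> int p ^ N dvd sum f (B \<inter> cell p d F a k)"
    and "dual_bases d F E" "\<forall>i<d. k i \<le> N"
  shows "int p ^ N dvd int p ^ (\<Sum>i<d. k i) * sum f (B \<inter> cell p d F a k)"
  using assms(5,6)
proof (induction "\<Sum>i<d. k i" arbitrary: F E k rule: less_induct)
  case less
  show ?case
  proof (cases "\<exists>i0<d. \<forall>i<d. i \<noteq> i0 \<longrightarrow> k i = 0")
    case True
    then show ?thesis using single less.prems by (meson dvd_mult)
  next
    case False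
    with d obtain i j where ij: "i < d" "j < d" "i \<noteq> j" and k: "1 \<le> k j" "k j \<le> k i"
      by (rule two_positive_entriesE)
    let ?F = "\<lambda>c. F(i := \<lambda>l. F i l + int c * int p ^ (k i - k j) * F j l)"
    let ?kc = "k(j := k j - 1)" and ?k1 = "k(i := k i - 1)" and ?k2 = "k(i := k i - 1, j := k j - 1)"
    let ?S = "\<lambda>F k. sum f (B \<inter> cell p d F a k)"
    define s where "s = (\<Sum>l<d. ?k1 l)"
    have pos: "0 < k i" "0 < k j" "0 < ?k1 j" and "?k1 j = k j" using ij k by auto
    then have s: "Suc s = (\<Sum>l<d. k l)" "(\<Sum>l<d. ?kc l) = s" "Suc (\<Sum>l<d. ?k2 l) = s"
      using sum_fun_upd_decrement[of i d k, OF ij(1) pos(1)] sum_fun_upd_decrement[of j d k, OF ij(2) pos(2)]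
        sum_fun_upd_decrement[of j d ?k1, OF ij(2) pos(3)]
      unfolding s_def by (simp_all only:)
    have bound: "\<forall>l<d. ?kc l \<le> N" "\<forall>l<d. ?k1 l \<le> N" "\<forall>l<d. ?k2 l \<le> N"
      using less.prems(2) by (auto simp: le_diff_conv)
    have IHc: "int p ^ N dvd int p ^ s * ?S (?F c) ?kc" for c
      using less.hyps[of ?kc] dual_bases_row_op[OF less.prems(1) ij] bound s by auto
    have IH1: "int p ^ N dvd int p ^ s * ?S F ?k1"
      using less.hyps[of ?k1] less.prems(1) bound s by (auto simp: s_def)
    have IH2: "int p ^ N dvd int p * (int p ^ (\<Sum>l<d. ?k2 l) * ?S F ?k2)"
      using less.hyps[of ?k2] less.prems(1) bound s by (auto intro: dvd_mult)
    have "int p ^ (\<Sum>l<d. k l) * ?S F k = int p ^ s * (int p * ?S F k)"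
      by (simp flip: s(1))
    also have "\<dots> = (\<Sum>c<p. int p ^ s * ?S (?F c) ?kc) + int p ^ s * ?S F ?k1
        - int p * (int p ^ (\<Sum>l<d. ?k2 l) * ?S F ?k2)"
      unfolding sum_cell_row_op[OF B p ij k] by (simp add: algebra_simps sum_distrib_left flip: s(3))
    finally show ?thesis using IHc IH1 IH2 by (simp add: dvd_sum dvd_add dvd_diff)
  qed
qed

lemma fibre_eq_cell:
  assumes c: "c \<in> box p d n"
  shows "fibre p d N n c = box p d N \<inter> cell p d (\<lambda>i l. of_bool (i = l)) c (\<lambda>_. n)"
proof -
  have "vmod p n x = c \<longleftrightarrow> (\<forall>i<d. int p ^ n dvd x i - c i)" if x: "x \<in> box p d N" for x
  proof -
    have "x i mod int p ^ n = c i \<longleftrightarrow> int p ^ n dvd x i - c i" if "i < d" for i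
      using box_mod[OF c, of i] by (metis mod_eq_dvd_iff)
    moreover have "x i mod int p ^ n = c i" if "\<not> i < d" for i
      using x c that by (simp add: box_def)
    ultimately show ?thesis by (auto simp: vmod_def fun_eq_iff)
  qed
  then show ?thesis by (auto simp: fibre_def cell_def coord_def)
qed

lemma fibre_sum_dvd:
  assumes p: "prime p" and d: "0 < d" and \<mu>: "\<forall>y. is_basis p d y \<longrightarrow> \<mu> \<in> basis_ideal p d y"
    and c: "c \<in> box p d n"
  shows "int p ^ n dvd (\<Sum>b\<in>fibre p d (n + d * n) n c. \<mu> (n + d * n) b)"
proof -
  let ?N = "n + d * n" and ?I = "\<lambda>i l. of_bool (i = l) :: int"
  have p0: "0 < p" using p by (rule prime_gt_0_nat)
  have "int p ^ ?N dvd int p ^ (\<Sum>i<d. n) * sum (\<mu> ?N) (box p d ?N \<inter> cell p d ?I c (\<lambda>_. n))"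
    using sum_cell_dvd_single[OF p0 \<mu>]
    by (intro sum_cell_dvd[OF p d finite_box _ dual_bases_id]) auto
  then have "int p ^ (d * n) * int p ^ n dvd int p ^ (d * n) * sum (\<mu> ?N) (fibre p d ?N n c)"
    by (simp add: fibre_eq_cell[OF c] power_add mult.commute)
  then show ?thesis using p0 by simp
qed

lemma eq_Iw_zero_if_mem_basis_ideals:
  assumes p: "prime p" and d: "0 < d" and \<mu>: "\<forall>y. is_basis p d y \<longrightarrow> \<mu> \<in> basis_ideal p d y"
  shows "\<mu> = Iw_zero"
proof -
  have p0: "0 < p" using p by (rule prime_gt_0_nat)
  let ?y = "rows_basis p d (\<lambda>i l. of_bool (i = l)) 0"
  have y: "\<forall>j<d - 1. ?y j \<in> Xgrp p d" using rows_basis_in_Xgrp[OF p0] by blast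
  have \<mu>_y: "\<mu> \<in> basis_ideal p d ?y"
    using \<mu> is_basis_rows_basis[OF p0 dual_bases_id d] by blast
  have "\<mu> n c = 0" for n c
  proof (cases "c \<in> box p d n")
    case True
    have "[\<mu> n c = (\<Sum>b\<in>fibre p d (n + d * n) n c. \<mu> (n + d * n) b)] (mod int p ^ n)"
      using compatible_fibre_sum[OF p0 compatible_basis_ideal[OF p0 y \<mu>_y] True] by simp
    then have "int p ^ n dvd \<mu> n c"
      using fibre_sum_dvd[OF p d \<mu> True] by (simp add: cong_dvd_iff)
    then show ?thesis using basis_ideal_mod[OF \<mu>_y, of n c] by (simp add: dvd_eq_mod_eq_0)
  next
    case False
    then show ?thesis using basis_ideal_outside_box[OF \<mu>_y] by blast
  qed
  then show ?thesis by (simp add: Iw_zero_def fun_eq_iff)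
qed

theorem corollary7:
  fixes p d :: nat
  assumes "prime p" and "d \<ge> 2"
  shows "(\<Inter>y\<in>{y. is_basis p d y}. basis_ideal p d y) = {Iw_zero}"
proof
  show "(\<Inter>y\<in>{y. is_basis p d y}. basis_ideal p d y) \<subseteq> {Iw_zero}"
    using eq_Iw_zero_if_mem_basis_ideals[OF assms(1), of d] assms(2) by auto
  show "{Iw_zero} \<subseteq> (\<Inter>y\<in>{y. is_basis p d y}. basis_ideal p d y)"
    using Iw_zero_mem_basis_ideal[OF prime_gt_0_nat[OF assms(1)]] by blast
qed

end
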